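(* Let $y\in\mathbb Y$ be such that the Riccati equations with parameter $y$ have a global solution $(\Phi_y,\Psi_y)$, and let $(h,x)\in C^1(\mathbb R_+)\times\mathbb X$ satisfy $h(0)=\ell+\langle\lambda,x\rangle$. Then the equation $h=\mathcal H_y(\theta,x)$, where $$\mathcal H_y(\theta,x)(\tau)=\ell-\int_0^\tau\theta(s)\langle\Psi_y'(\tau-s),e_1\rangle ds-\Phi_y'(\tau)-\langle\Psi_y'(\tau),x\rangle,\quad\tau\ge0,$$ has a unique solution $\theta\in C(\mathbb R_+)$ (denoted $\mathcal C_y(h,x)$).
   Context: $\mathbb X=\mathbb R_+^{d_1}\times\mathbb R^{d_2}$ (up to permutation of coordinates), $d=d_1+d_2\ge1$, $e_1$ the first canonical basis vector, $\langle\cdot,\cdot\rangle$ the Euclidean inner product. For a parameter $y$: symmetric positive semidefinite $a_y,\alpha_y^1,\dots,\alpha_y^d\in\mathbb R^{d\times d}$ and $b_y,\beta_y^1,\dots,\beta_y^d\in\mathbb R^d$. Fix $\ell\in\mathbb R$ and $\lambda\in\mathbb R^d$ with $\langle\lambda,e_1\rangle\neq0$. With $F_y(u)=\tfrac12\langle u,a_yu\rangle+\langle u,b_y\rangle$, $R_y^i(u)=\tfrac12\langle u,\alpha_y^iu\rangle+\langle u,\beta_y^i\rangle$, the Riccati equations are $\Phi_y'=F_y\circ\Psi_y$, $\Phi_y(0)=0$, $\Psi_y'=R_y\circ\Psi_y-\lambda$, $\Psi_y(0)=0$. *)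

theory Defs
  imports "HOL-Analysis.Analysis"
begin

text \<open>Dimension d is the cardinality of the finite index type 'n; vectors are real^'n.\<close>

definition psd_sym :: "real^'n^'n \<Rightarrow> bool" where
  "psd_sym A \<longleftrightarrow> transpose A = A \<and> (\<forall>v. v \<bullet> (A *v v) \<ge> 0)"

text \<open>State space X = R_+^{d1} x R^{d2} up to permutation: the coordinates in I are nonnegative.\<close>
definition state_space :: "'n set \<Rightarrow> (real^'n) set" where
  "state_space I = {x. \<forall>i\<in>I. x $ i \<ge> 0}"

definition ricF :: "real^'n^'n \<Rightarrow> real^'n \<Rightarrow> real^'n \<Rightarrow> real" where
  "ricF a b u = (1/2) * (u \<bullet> (a *v u)) + u \<bullet> b"

definition ricR :: "('n \<Rightarrow> real^'n^'n) \<Rightarrow> ('n \<Rightarrow> real^'n) \<Rightarrow> real^'n \<Rightarrow> real^'n" where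
  "ricR alpha beta u = (\<chi> i. (1/2) * (u \<bullet> (alpha i *v u)) + u \<bullet> beta i)"

definition riccati_global_solution ::
  "real^'n^'n \<Rightarrow> real^'n \<Rightarrow> ('n \<Rightarrow> real^'n^'n) \<Rightarrow> ('n \<Rightarrow> real^'n) \<Rightarrow> real^'n
   \<Rightarrow> (real \<Rightarrow> real) \<Rightarrow> (real \<Rightarrow> real^'n) \<Rightarrow> bool" where
  "riccati_global_solution a b alpha beta lam Phi Psi \<longleftrightarrow>
     Phi 0 = 0 \<and> Psi 0 = 0 \<and>
     (\<forall>t\<ge>0. (Phi has_real_derivative ricF a b (Psi t)) (at t within {0..})) \<and>
     (\<forall>t\<ge>0. (Psi has_vector_derivative (ricR alpha beta (Psi t) - lam)) (at t within {0..}))"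

definition C1_nonneg :: "(real \<Rightarrow> real) \<Rightarrow> bool" where
  "C1_nonneg h \<longleftrightarrow> (\<exists>h'. continuous_on {0..} h' \<and>
      (\<forall>t\<ge>0. (h has_real_derivative h' t) (at t within {0..})))"

text \<open>The operator H_y(theta,x)(tau); Phi' and Psi' are written via the Riccati right-hand sides.\<close>
definition opH ::
  "real^'n^'n \<Rightarrow> real^'n \<Rightarrow> ('n \<Rightarrow> real^'n^'n) \<Rightarrow> ('n \<Rightarrow> real^'n) \<Rightarrow> real^'n \<Rightarrow> real
   \<Rightarrow> 'n \<Rightarrow> (real \<Rightarrow> real^'n) \<Rightarrow> (real \<Rightarrow> real) \<Rightarrow> real^'n \<Rightarrow> real \<Rightarrow> real" where
  "opH a b alpha beta lam l k Psi theta x tau =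
     l - integral {0..tau} (\<lambda>s. theta s * ((ricR alpha beta (Psi (tau - s)) - lam) \<bullet> axis k 1))
       - ricF a b (Psi tau) - (ricR alpha beta (Psi tau) - lam) \<bullet> x"

end

theory Submission
  imports Defs
begin

text \<open>With \<open>G t = \<langle>\<Psi>'(t), e\<^sub>1\<rangle>\<close> and
  \<open>f t = \<ell> - \<Phi>'(t) - \<langle>\<Psi>'(t), x\<rangle> - h t\<close>, the equation \<open>h = \<H>(\<theta>, x)\<close> is the Volterra
  equation of the first kind \<open>\<integral>\<^sub>0\<^sup>t \<theta>(s) G(t - s) ds = f t\<close>. Both \<open>G\<close> and \<open>f\<close> are
  \<open>C\<^sup>1\<close>, since \<open>\<Phi>'\<close> and \<open>\<Psi>'\<close> are quadratic polynomials in \<open>\<Psi>\<close>; moreover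
  \<open>G 0 = - \<lambda>\<^sub>1 \<noteq> 0\<close>, and \<open>f 0 = 0\<close> is exactly the compatibility condition
  \<open>h 0 = \<ell> + \<langle>\<lambda>, x\<rangle>\<close>. Differentiation turns the equation into one of the second
  kind, \<open>G 0 * \<theta> t + volterra_conv \<theta> G' t = f' t\<close>, which has a unique continuous solution:
  uniqueness by Gronwall's inequality, existence on each \<open>[0, T]\<close> by Banach's fixed point
  theorem for an exponentially weighted sup norm, with the local solutions glued together by
  uniqueness. Since \<open>f 0 = 0\<close>, integrating back recovers the equation of the first kind.\<close>

lemma has_integral_exp_scaled:
  fixes g a b :: real
  assumes "g \<noteq> 0" "a \<le> b"
  shows "((\<lambda>s. exp (g * s)) has_integral (exp (g * b) - exp (g * a)) / g) {a..b}"
proof -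
  have "((\<lambda>s. exp (g * s)) has_integral (exp (g * b) / g - exp (g * a) / g)) {a..b}"
  proof (rule fundamental_theorem_of_calculus[OF assms(2)])
    fix x assume "x \<in> {a..b}"
    have "((\<lambda>s. exp (g * s) / g) has_real_derivative exp (g * x)) (at x within {a..b})"
      using assms(1) by (auto intro!: derivative_eq_intros)
    then show "((\<lambda>s. exp (g * s) / g) has_vector_derivative exp (g * x)) (at x within {a..b})"
      by (simp add: has_real_derivative_iff_has_vector_derivative)
  qed
  then show ?thesis by (simp add: diff_divide_distrib)
qed

text \<open>The maximum \<open>W\<close> of the weighted function \<open>exp (- \<beta> * s) * \<bar>D s\<bar>\<close> with
  \<open>\<beta> = 2 * C + 1\<close> satisfies \<open>W \<le> C * W / \<beta> \<le> W / 2\<close>.\<close>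

lemma gronwall_zero:
  fixes D :: "real \<Rightarrow> real"
  assumes cont: "continuous_on {0..T} D" and C: "0 \<le> C"
    and le: "\<And>t. t \<in> {0..T} \<Longrightarrow> \<bar>D t\<bar> \<le> C * integral {0..t} (\<lambda>s. \<bar>D s\<bar>)"
    and t: "t \<in> {0..T}"
  shows "D t = 0"
proof -
  define \<beta> where "\<beta> = 2 * C + 1"
  have \<beta>: "\<beta> > 0" using C by (simp add: \<beta>_def)
  define w where "w s = exp (- \<beta> * s) * \<bar>D s\<bar>" for s
  have "continuous_on {0..T} w" unfolding w_def by (intro continuous_intros cont)
  then obtain t0 where t0: "t0 \<in> {0..T}" and t0_max: "\<And>s. s \<in> {0..T} \<Longrightarrow> w s \<le> w t0"
    using continuous_attains_sup[OF compact_Icc, of 0 T w] t by auto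
  define W where "W = w t0"
  have W: "W \<ge> 0" by (simp add: W_def w_def)
  have D_le: "\<bar>D s\<bar> \<le> W * exp (\<beta> * s)" if "s \<in> {0..t0}" for s
  proof -
    have "exp (\<beta> * s) * w s \<le> exp (\<beta> * s) * W"
      using that t0 t0_max W_def by (intro mult_left_mono) auto
    moreover have "exp (\<beta> * s) * w s = \<bar>D s\<bar>"
      by (simp add: w_def mult.assoc[symmetric] exp_add[symmetric])
    ultimately show ?thesis by (metis mult.commute)
  qed
  have int: "(\<lambda>s. \<bar>D s\<bar>) integrable_on {0..t0}"
    using t0 by (intro integrable_continuous_real continuous_intros continuous_on_subset[OF cont]) auto
  have hi: "((\<lambda>s. W * exp (\<beta> * s)) has_integral W * ((exp (\<beta> * t0) - 1) / \<beta>)) {0..t0}"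
    using has_integral_mult_right[OF has_integral_exp_scaled[of \<beta> 0 t0]] t0 \<beta> by simp
  have "integral {0..t0} (\<lambda>s. \<bar>D s\<bar>) \<le> W * ((exp (\<beta> * t0) - 1) / \<beta>)"
    using has_integral_le[OF integrable_integral[OF int] hi] D_le by auto
  also have "\<dots> \<le> W * (exp (\<beta> * t0) / \<beta>)"
    using W \<beta> by (intro mult_left_mono) (auto simp: divide_right_mono)
  finally have "\<bar>D t0\<bar> \<le> C * (W * (exp (\<beta> * t0) / \<beta>))"
    using le[OF t0] mult_left_mono[OF _ C] by fastforce
  then have "exp (- \<beta> * t0) * \<bar>D t0\<bar> \<le> exp (- \<beta> * t0) * (C * (W * (exp (\<beta> * t0) / \<beta>)))"
    by (rule mult_left_mono) simp
  also have "\<dots> = C * W / \<beta>"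
    by (simp add: field_simps exp_minus)
  finally have "W \<le> C * W / \<beta>" by (simp add: W_def w_def)
  moreover have "C * W / \<beta> \<le> W / 2"
    using W \<beta> C by (simp add: \<beta>_def field_simps mult_right_mono)
  ultimately have "W = 0" using W by linarith
  then have "w t \<le> 0" using t0_max[OF t] W_def by simp
  then show ?thesis by (simp add: w_def mult_le_0_iff)
qed

definition volterra_conv :: "(real \<Rightarrow> real) \<Rightarrow> (real \<Rightarrow> real) \<Rightarrow> real \<Rightarrow> real" where
  "volterra_conv u K t = integral {0..t} (\<lambda>s. u s * K (t - s))"

lemma continuous_on_reflect_shift:
  fixes K :: "real \<Rightarrow> real"
  assumes "continuous_on {0..T} K" "t \<le> T"
  shows "continuous_on {0..t} (\<lambda>s. K (t - s))"
proof -
  have "continuous_on {0..t} (\<lambda>s. t - s)" by (intro continuous_intros)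
  moreover have "(\<lambda>s. t - s) ` {0..t} \<subseteq> {0..T}" using assms(2) by auto
  ultimately show ?thesis using continuous_on_compose2[OF assms(1)] by blast
qed

lemma integrable_volterra_conv_integrand:
  fixes u K :: "real \<Rightarrow> real"
  assumes "continuous_on {0..t} u" "continuous_on {0..t} K"
  shows "(\<lambda>s. u s * K (t - s)) integrable_on {0..t}"
  by (intro integrable_continuous_real continuous_intros assms
      continuous_on_reflect_shift[OF assms(2) order_refl])

lemma volterra_conv_diff:
  fixes u1 u2 K :: "real \<Rightarrow> real"
  assumes "continuous_on {0..t} u1" "continuous_on {0..t} u2" "continuous_on {0..t} K"
  shows "volterra_conv (\<lambda>s. u1 s - u2 s) K t = volterra_conv u1 K t - volterra_conv u2 K t"
  unfolding volterra_conv_def left_diff_distrib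
  by (intro integral_diff integrable_volterra_conv_integrand assms)

lemma volterra_conv_split:
  fixes u G Gt E :: "real \<Rightarrow> real"
  assumes u: "continuous_on {0..T} u" and Gt: "continuous_on {-T..T} Gt"
    and \<sigma>: "\<sigma> \<in> {0..T}"
    and GG: "\<And>r. r \<in> {0..T} \<Longrightarrow> Gt r = G r" and GE: "\<And>r. r \<le> 0 \<Longrightarrow> Gt r = E r"
  shows "volterra_conv u G \<sigma> =
    integral {0..T} (\<lambda>s. u s * Gt (\<sigma> - s)) - integral {\<sigma>..T} (\<lambda>s. u s * E (\<sigma> - s))"
proof -
  have "continuous_on {0..T} (\<lambda>s. Gt (\<sigma> - s))"
    by (rule continuous_on_compose2[OF Gt]) (use \<sigma> in \<open>auto intro: continuous_intros\<close>)
  then have int: "(\<lambda>s. u s * Gt (\<sigma> - s)) integrable_on {0..T}"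
    by (intro integrable_continuous_real continuous_intros u)
  have "integral {0..T} (\<lambda>s. u s * Gt (\<sigma> - s)) =
      integral {0..\<sigma>} (\<lambda>s. u s * Gt (\<sigma> - s)) + integral {\<sigma>..T} (\<lambda>s. u s * Gt (\<sigma> - s))"
    using Henstock_Kurzweil_Integration.integral_combine[OF _ _ int, of \<sigma>] \<sigma> by auto
  also have "integral {0..\<sigma>} (\<lambda>s. u s * Gt (\<sigma> - s)) = volterra_conv u G \<sigma>"
    unfolding volterra_conv_def by (rule integral_cong) (use \<sigma> GG in auto)
  also have "integral {\<sigma>..T} (\<lambda>s. u s * Gt (\<sigma> - s)) = integral {\<sigma>..T} (\<lambda>s. u s * E (\<sigma> - s))"
    by (rule integral_cong) (use GE in auto)
  finally show ?thesis by simp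
qed

lemma continuous_on_parametric_integrand:
  fixes u Gt :: "real \<Rightarrow> real"
  assumes "continuous_on {0..T} u" "continuous_on UNIV Gt"
  shows "continuous_on (U \<times> cbox 0 T) (\<lambda>(\<sigma>, s). u s * Gt (\<sigma> - s))"
proof -
  have "continuous_on (U \<times> cbox 0 T) (\<lambda>x. u (snd x))"
    by (rule continuous_on_compose2[OF assms(1) continuous_on_snd]) auto
  moreover have "continuous_on (U \<times> cbox 0 T) (\<lambda>x. fst x - snd x)"
    by (intro continuous_intros)
  then have "continuous_on (U \<times> cbox 0 T) (\<lambda>x. Gt (fst x - snd x))"
    by (rule continuous_on_compose2[OF assms(2)]) auto
  ultimately show ?thesis
    using continuous_on_mult by (fastforce simp: case_prod_beta')
qed

lemma continuous_on_volterra_conv: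
  fixes u K :: "real \<Rightarrow> real"
  assumes u: "continuous_on {0..T} u" and K: "continuous_on {0..T} K"
  shows "continuous_on {0..T} (volterra_conv u K)"
proof (cases "0 \<le> T")
  case T: True
  define Kt where "Kt r = K (min T (max 0 r))" for r
  have "continuous_on UNIV (\<lambda>r. min T (max 0 r))" by (intro continuous_intros)
  then have Kt: "continuous_on UNIV Kt"
    unfolding Kt_def by (rule continuous_on_compose2[OF K]) (use T in auto)
  have "continuous_on {0..T} (\<lambda>\<sigma>. integral (cbox 0 T) (\<lambda>s. u s * Kt (\<sigma> - s)))"
    by (intro integral_continuous_on_param continuous_on_parametric_integrand u Kt)
  moreover have "continuous_on {0..T} (\<lambda>\<sigma>. integral {\<sigma>..T} (\<lambda>s. u s * K 0))"
    by (intro indefinite_integral_continuous_1' integrable_continuous_real continuous_intros u)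
  ultimately have "continuous_on {0..T}
      (\<lambda>\<sigma>. integral {0..T} (\<lambda>s. u s * Kt (\<sigma> - s)) - integral {\<sigma>..T} (\<lambda>s. u s * K 0))"
    by (auto intro: continuous_on_diff)
  moreover have "volterra_conv u K \<sigma> =
      integral {0..T} (\<lambda>s. u s * Kt (\<sigma> - s)) - integral {\<sigma>..T} (\<lambda>s. u s * K 0)"
    if "\<sigma> \<in> {0..T}" for \<sigma>
    by (rule volterra_conv_split[OF u continuous_on_subset[OF Kt] that]) (use T in \<open>auto simp: Kt_def\<close>)
  ultimately show ?thesis by (metis (no_types, lifting) continuous_on_eq)
qed simp

lemma has_real_derivative_tangent_extension:
  fixes G G' :: "real \<Rightarrow> real"
  assumes G: "\<And>t. t \<ge> 0 \<Longrightarrow> (G has_real_derivative G' t) (at t within {0..})"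
  shows "((\<lambda>r. if 0 \<le> r then G r else G 0 + G' 0 * r) has_real_derivative G' (max 0 r)) (at r)"
proof -
  let ?Gt = "\<lambda>r. if 0 \<le> r then G r else G 0 + G' 0 * r"
  consider "r > 0" | "r < 0" | "r = 0" by linarith
  then show ?thesis
  proof cases
    case 1
    have "(G has_real_derivative G' r) (at r)"
      using G[of r] 1 at_within_interior[of r "{0..}"] by auto
    then have "(?Gt has_real_derivative G' r) (at r)"
      by (rule has_field_derivative_transform_within_open[where S="{0<..}"]) (use 1 in auto)
    then show ?thesis using 1 by simp
  next
    case 2
    have "((\<lambda>r. G 0 + G' 0 * r) has_real_derivative G' 0) (at r)"
      by (auto intro!: derivative_eq_intros)
    then have "(?Gt has_real_derivative G' 0) (at r)"
      by (rule has_field_derivative_transform_within_open[where S="{..<0}"]) (use 2 in auto)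
    then show ?thesis using 2 by simp
  next
    case 3
    have "(G has_real_derivative G' 0) (at 0 within {0<..})"
      by (rule has_field_derivative_subset[OF G]) auto
    then have "((\<lambda>y. (G y - G 0) / (y - 0)) \<longlongrightarrow> G' 0) (at_right 0)"
      by (simp add: has_field_derivative_iff)
    then have right: "((\<lambda>y. (?Gt y - ?Gt 0) / (y - 0)) \<longlongrightarrow> G' 0) (at_right 0)"
      by (rule Lim_transform_eventually)
        (auto simp: eventually_at_right_less eventually_at_right_field intro: exI[of _ 1])
    have "\<forall>\<^sub>F y in at_left 0. G' 0 = (?Gt y - ?Gt 0) / (y - 0)"
      unfolding eventually_at_left_field by (auto intro!: exI[of _ "-1"])
    then have left: "((\<lambda>y. (?Gt y - ?Gt 0) / (y - 0)) \<longlongrightarrow> G' 0) (at_left 0)"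
      by (rule Lim_transform_eventually[OF tendsto_const])
    have "((\<lambda>y. (?Gt y - ?Gt 0) / (y - 0)) \<longlongrightarrow> G' 0) (at 0)"
      by (rule filterlim_split_at[OF left right])
    then show ?thesis using 3 by (simp add: has_field_derivative_iff)
  qed
qed

lemma has_real_derivative_integral_shifted_kernel:
  fixes u Gt Gt' :: "real \<Rightarrow> real"
  assumes u: "continuous_on {0..T} u"
    and Gt: "\<And>r. (Gt has_real_derivative Gt' r) (at r)" and Gt': "continuous_on UNIV Gt'"
    and \<tau>: "\<tau> \<in> {0..T}"
  shows "((\<lambda>\<sigma>. integral {0..T} (\<lambda>s. u s * Gt (\<sigma> - s))) has_real_derivative
           integral {0..T} (\<lambda>s. u s * Gt' (\<tau> - s))) (at \<tau> within {0..T})"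
proof -
  have "continuous_on UNIV Gt"
    using Gt by (meson DERIV_isCont continuous_at_imp_continuous_on)
  have "((\<lambda>\<sigma>. integral (cbox 0 T) (\<lambda>s. u s * Gt (\<sigma> - s))) has_field_derivative
         integral (cbox 0 T) (\<lambda>s. u s * Gt' (\<tau> - s))) (at \<tau> within {0..T})"
  proof (rule leibniz_rule_field_derivative)
    fix \<sigma> s
    have "((\<lambda>\<sigma>. \<sigma> - s) has_real_derivative 1) (at \<sigma> within {0..T})"
      by (auto intro!: derivative_eq_intros)
    from DERIV_chain2[OF Gt this]
    have "((\<lambda>\<sigma>. Gt (\<sigma> - s)) has_real_derivative Gt' (\<sigma> - s)) (at \<sigma> within {0..T})"
      by simp
    then show "((\<lambda>\<sigma>. u s * Gt (\<sigma> - s)) has_field_derivative u s * Gt' (\<sigma> - s)) (at \<sigma> within {0..T})"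
      by (rule DERIV_cmult)
  next
    fix \<sigma>
    show "(\<lambda>s. u s * Gt (\<sigma> - s)) integrable_on cbox 0 T"
      by (intro integrable_continuous continuous_intros u
          continuous_on_compose2[OF \<open>continuous_on UNIV Gt\<close>]) (use u in auto)
  qed (use \<tau> continuous_on_parametric_integrand[OF u Gt'] in auto)
  then show ?thesis by simp
qed

lemma volterra_conv_eq_affine_extension:
  fixes u G Gt :: "real \<Rightarrow> real"
  assumes u: "continuous_on {0..T} u" and Gt: "continuous_on UNIV Gt"
    and Gt_pos: "\<And>r. r \<ge> 0 \<Longrightarrow> Gt r = G r" and Gt_neg: "\<And>r. r \<le> 0 \<Longrightarrow> Gt r = G 0 + G1 * r"
    and \<sigma>: "\<sigma> \<in> {0..T}"
  shows "volterra_conv u G \<sigma> = integral {0..T} (\<lambda>s. u s * Gt (\<sigma> - s))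
    - ((G 0 + G1 * \<sigma>) * integral {\<sigma>..T} u - G1 * integral {\<sigma>..T} (\<lambda>s. s * u s))"
proof -
  have u\<sigma>: "continuous_on {\<sigma>..T} u" using u \<sigma> by (auto intro: continuous_on_subset)
  have "volterra_conv u G \<sigma> =
      integral {0..T} (\<lambda>s. u s * Gt (\<sigma> - s)) - integral {\<sigma>..T} (\<lambda>s. u s * (G 0 + G1 * (\<sigma> - s)))"
    by (rule volterra_conv_split[OF u continuous_on_subset[OF Gt] \<sigma>]) (auto simp: Gt_pos Gt_neg)
  also have "integral {\<sigma>..T} (\<lambda>s. u s * (G 0 + G1 * (\<sigma> - s))) =
      integral {\<sigma>..T} (\<lambda>s. (G 0 + G1 * \<sigma>) * u s - G1 * (s * u s))"
    by (rule integral_cong) (simp add: algebra_simps)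
  also have "\<dots> = (G 0 + G1 * \<sigma>) * integral {\<sigma>..T} u - G1 * integral {\<sigma>..T} (\<lambda>s. s * u s)"
    by (subst integral_diff) (use u\<sigma> in \<open>auto intro!: integrable_continuous_real continuous_intros\<close>)
  finally show ?thesis .
qed

lemma has_real_derivative_volterra_conv:
  fixes u G G' :: "real \<Rightarrow> real"
  assumes u: "continuous_on {0..T} u"
    and G: "\<And>t. t \<ge> 0 \<Longrightarrow> (G has_real_derivative G' t) (at t within {0..})"
    and G': "continuous_on {0..} G'"
    and \<tau>: "\<tau> \<in> {0..T}"
  shows "(volterra_conv u G has_real_derivative u \<tau> * G 0 + volterra_conv u G' \<tau>) (at \<tau> within {0..T})"
proof -
  \<comment> \<open>Extending \<open>G\<close> by its tangent line at 0 turns \<open>volterra_conv u G \<sigma>\<close> into an integral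
    over the fixed interval \<open>[0, T]\<close>, to which the Leibniz rule applies, minus an explicit
    correction \<open>B \<sigma>\<close>.\<close>
  define Gt where "Gt r = (if 0 \<le> r then G r else G 0 + G' 0 * r)" for r
  define Gt' where "Gt' r = G' (max 0 r)" for r
  have Gt: "(Gt has_real_derivative Gt' r) (at r)" for r
    unfolding Gt_def Gt'_def by (rule has_real_derivative_tangent_extension[OF G])
  have "continuous_on UNIV (\<lambda>r::real. max 0 r)" by (intro continuous_intros)
  then have Gt'_cont: "continuous_on UNIV Gt'"
    unfolding Gt'_def by (rule continuous_on_compose2[OF G']) auto
  have "continuous_on UNIV Gt"
    using Gt by (meson DERIV_isCont continuous_at_imp_continuous_on)
  define A where "A \<sigma> = integral {0..T} (\<lambda>s. u s * Gt (\<sigma> - s))" for \<sigma>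
  define I1 where "I1 \<sigma> = integral {\<sigma>..T} u" for \<sigma>
  define I2 where "I2 \<sigma> = integral {\<sigma>..T} (\<lambda>s. s * u s)" for \<sigma>
  define B where "B \<sigma> = (G 0 + G' 0 * \<sigma>) * I1 \<sigma> - G' 0 * I2 \<sigma>" for \<sigma>
  have conv_eq: "volterra_conv u G \<sigma> = A \<sigma> - B \<sigma>" if "\<sigma> \<in> {0..T}" for \<sigma>
    unfolding A_def B_def I1_def I2_def
    by (rule volterra_conv_eq_affine_extension[OF u \<open>continuous_on UNIV Gt\<close> _ _ that])
      (auto simp: Gt_def)
  have dA: "(A has_real_derivative integral {0..T} (\<lambda>s. u s * Gt' (\<tau> - s))) (at \<tau> within {0..T})"
    unfolding A_def by (rule has_real_derivative_integral_shifted_kernel[OF u Gt Gt'_cont \<tau>])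
  have dI1: "(I1 has_real_derivative - u \<tau>) (at \<tau> within {0..T})"
    unfolding I1_def by (rule integral_has_real_derivative'[OF u \<tau>])
  have dI2: "(I2 has_real_derivative - (\<tau> * u \<tau>)) (at \<tau> within {0..T})"
    unfolding I2_def by (rule integral_has_real_derivative'[OF _ \<tau>]) (intro continuous_intros u)
  have "((\<lambda>\<sigma>. G 0 + G' 0 * \<sigma>) has_real_derivative G' 0) (at \<tau> within {0..T})"
    by (auto intro!: derivative_eq_intros)
  from DERIV_diff[OF DERIV_mult[OF this dI1] DERIV_cmult[OF dI2, of "G' 0"]]
  have dB: "(B has_real_derivative G' 0 * I1 \<tau> - G 0 * u \<tau>) (at \<tau> within {0..T})"
    by (simp add: B_def[abs_def] algebra_simps)
  note AB = DERIV_diff[OF dA dB]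
  have "volterra_conv u G' \<tau> =
      integral {0..T} (\<lambda>s. u s * Gt' (\<tau> - s)) - integral {\<tau>..T} (\<lambda>s. u s * G' 0)"
    by (rule volterra_conv_split[OF u continuous_on_subset[OF Gt'_cont] \<tau>]) (auto simp: Gt'_def max_def)
  then have "integral {0..T} (\<lambda>s. u s * Gt' (\<tau> - s)) - (G' 0 * I1 \<tau> - G 0 * u \<tau>) =
      u \<tau> * G 0 + volterra_conv u G' \<tau>"
    by (simp add: I1_def mult.commute)
  note AB = AB[unfolded this]
  show ?thesis
  proof (rule has_field_derivative_transform_within[OF AB zero_less_one \<tau>])
    fix \<sigma> :: real assume "\<sigma> \<in> {0..T}"
    then show "A \<sigma> - B \<sigma> = volterra_conv u G \<sigma>" using conv_eq by simp
  qed
qed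

lemma abs_volterra_conv_damped_le:
  fixes u K :: "real \<Rightarrow> real"
  assumes g: "g > 0" and t: "0 \<le> t" and u: "continuous_on {0..t} u" and K: "continuous_on {0..t} K"
    and u_le: "\<And>s. s \<in> {0..t} \<Longrightarrow> \<bar>u s\<bar> \<le> D" and K_le: "\<And>r. r \<in> {0..t} \<Longrightarrow> \<bar>K r\<bar> \<le> M"
  shows "\<bar>volterra_conv u (\<lambda>r. exp (- g * r) * K r) t\<bar> \<le> D * M / g"
proof -
  have D: "0 \<le> D" using u_le[of 0] t by auto
  have M: "0 \<le> M" using K_le[of 0] t by auto
  have hi: "((\<lambda>s. (D * M * exp (- g * t)) * exp (g * s)) has_integral
      (D * M * exp (- g * t)) * ((exp (g * t) - 1) / g)) {0..t}"
    using has_integral_mult_right[OF has_integral_exp_scaled[of g 0 t]] g t by simp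
  have "\<bar>integral {0..t} (\<lambda>s. u s * (exp (- g * (t - s)) * K (t - s)))\<bar> \<le>
      integral {0..t} (\<lambda>s. (D * M * exp (- g * t)) * exp (g * s))"
  proof (rule integral_norm_bound_integral[where f = "\<lambda>s. u s * (exp (- g * (t - s)) * K (t - s))",
        simplified real_norm_def])
    show "(\<lambda>s. u s * (exp (- g * (t - s)) * K (t - s))) integrable_on {0..t}"
      by (intro integrable_continuous_real continuous_intros u continuous_on_reflect_shift[OF K order_refl])
    show "(\<lambda>s. (D * M * exp (- g * t)) * exp (g * s)) integrable_on {0..t}"
      using hi by blast
    fix s assume s: "s \<in> {0..t}"
    have "\<bar>u s\<bar> * \<bar>K (t - s)\<bar> \<le> D * M"
      using u_le[OF s] K_le[of "t - s"] s by (intro mult_mono) auto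
    then have "\<bar>u s\<bar> * \<bar>K (t - s)\<bar> * exp (- g * (t - s)) \<le> D * M * exp (- g * (t - s))"
      by (rule mult_right_mono) simp
    moreover have "exp (- g * (t - s)) = exp (- g * t) * exp (g * s)"
      by (simp add: exp_add[symmetric] algebra_simps)
    ultimately show "\<bar>u s * (exp (- g * (t - s)) * K (t - s))\<bar> \<le> (D * M * exp (- g * t)) * exp (g * s)"
      by (simp add: abs_mult algebra_simps)
  qed
  also have "\<dots> = (D * M * exp (- g * t)) * ((exp (g * t) - 1) / g)"
    using integral_unique[OF hi] by simp
  also have "\<dots> = D * M * (1 - exp (- g * t)) / g"
    by (simp add: field_simps exp_minus)
  also have "\<dots> \<le> D * M / g"
    using D M g by (intro divide_right_mono mult_left_le) auto
  finally show ?thesis by (simp add: volterra_conv_def)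
qed

lemma volterra_second_kind_zero:
  fixes u K :: "real \<Rightarrow> real"
  assumes c: "c \<noteq> 0" and K: "continuous_on {0..T} K" and u: "continuous_on {0..T} u"
    and eq: "\<And>t. t \<in> {0..T} \<Longrightarrow> c * u t + volterra_conv u K t = 0"
    and t: "t \<in> {0..T}"
  shows "u t = 0"
proof -
  obtain M where M: "M \<ge> 0" "\<And>r. r \<in> {0..T} \<Longrightarrow> \<bar>K r\<bar> \<le> M"
    using continuous_on_compact_bound[OF compact_Icc K] by auto
  show ?thesis
  proof (rule gronwall_zero[OF u _ _ t])
    show "0 \<le> M / \<bar>c\<bar>" using M by simp
    fix t assume t: "t \<in> {0..T}"
    have ut: "continuous_on {0..t} u" using u t by (auto intro: continuous_on_subset)
    have "\<bar>volterra_conv u K t\<bar> \<le> integral {0..t} (\<lambda>s. M * \<bar>u s\<bar>)"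
      unfolding volterra_conv_def
    proof (rule integral_norm_bound_integral[where f = "\<lambda>s. u s * K (t - s)", simplified real_norm_def])
      show "(\<lambda>s. u s * K (t - s)) integrable_on {0..t}"
        using K t by (intro integrable_volterra_conv_integrand ut) (auto intro: continuous_on_subset)
      show "(\<lambda>s. M * \<bar>u s\<bar>) integrable_on {0..t}"
        by (intro integrable_continuous_real continuous_intros ut)
      fix s assume "s \<in> {0..t}"
      then have "\<bar>K (t - s)\<bar> \<le> M" using M(2)[of "t - s"] t by auto
      then show "\<bar>u s * K (t - s)\<bar> \<le> M * \<bar>u s\<bar>"
        by (simp add: abs_mult) (metis abs_ge_zero mult.commute mult_right_mono)
    qed
    moreover have "\<bar>c\<bar> * \<bar>u t\<bar> = \<bar>volterra_conv u K t\<bar>"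
      using eq[OF t] by (metis abs_minus_cancel abs_mult add_eq_0_iff)
    ultimately have "\<bar>c\<bar> * \<bar>u t\<bar> \<le> M * integral {0..t} (\<lambda>s. \<bar>u s\<bar>)" by simp
    then show "\<bar>u t\<bar> \<le> M / \<bar>c\<bar> * integral {0..t} (\<lambda>s. \<bar>u s\<bar>)"
      using c by (simp add: field_simps)
  qed
qed

lemma volterra_second_kind_unique:
  fixes u1 u2 K u0 :: "real \<Rightarrow> real"
  assumes c: "c \<noteq> 0" and K: "continuous_on {0..T} K"
    and u1: "continuous_on {0..T} u1" "\<And>t. t \<in> {0..T} \<Longrightarrow> c * u1 t + volterra_conv u1 K t = u0 t"
    and u2: "continuous_on {0..T} u2" "\<And>t. t \<in> {0..T} \<Longrightarrow> c * u2 t + volterra_conv u2 K t = u0 t"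
    and t: "t \<in> {0..T}"
  shows "u1 t = u2 t"
proof -
  have "u1 t - u2 t = 0"
  proof (rule volterra_second_kind_zero[OF c K, where u = "\<lambda>s. u1 s - u2 s"])
    show "continuous_on {0..T} (\<lambda>s. u1 s - u2 s)" by (intro continuous_intros u1 u2)
    fix s assume s: "s \<in> {0..T}"
    then have "volterra_conv (\<lambda>s. u1 s - u2 s) K s = volterra_conv u1 K s - volterra_conv u2 K s"
      by (intro volterra_conv_diff continuous_on_subset[OF u1(1)] continuous_on_subset[OF u2(1)]
          continuous_on_subset[OF K]) auto
    with u1(2)[OF s] u2(2)[OF s]
    show "c * (u1 s - u2 s) + volterra_conv (\<lambda>s. u1 s - u2 s) K s = 0"
      by (simp add: algebra_simps)
  qed (rule t)
  then show ?thesis by simp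
qed

lemma fixed_point_continuous_on_interval:
  fixes F :: "(real \<Rightarrow> real) \<Rightarrow> real \<Rightarrow> real"
  assumes T: "0 \<le> T" and q: "0 \<le> q" "q < 1"
    and F_cont: "\<And>v. continuous_on {0..T} v \<Longrightarrow> continuous_on {0..T} (F v)"
    and F_contr: "\<And>v v' D t. continuous_on {0..T} v \<Longrightarrow> continuous_on {0..T} v' \<Longrightarrow>
      (\<And>s. s \<in> {0..T} \<Longrightarrow> \<bar>v s - v' s\<bar> \<le> D) \<Longrightarrow> t \<in> {0..T} \<Longrightarrow> \<bar>F v t - F v' t\<bar> \<le> q * D"
  shows "\<exists>v. continuous_on {0..T} v \<and> (\<forall>t\<in>{0..T}. F v t = v t)"
proof -
  define \<Phi> where "\<Phi> v = (SOME v'. \<forall>x. apply_bcontfun v' x = F (apply_bcontfun v) (clamp 0 T x))" for v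
  have \<Phi>: "apply_bcontfun (\<Phi> v) x = F (apply_bcontfun v) (clamp 0 T x)" for v x
  proof -
    have "continuous_on (cbox 0 T) (F (apply_bcontfun v))"
      unfolding cbox_interval by (rule F_cont) auto
    then obtain v' :: "real \<Rightarrow>\<^sub>C real" where "\<And>x. apply_bcontfun v' x = F (apply_bcontfun v) (clamp 0 T x)"
      using continuous_on_cbox_bcontfunE by metis
    then have "\<exists>v'. \<forall>x. apply_bcontfun v' x = F (apply_bcontfun v) (clamp 0 T x)" by blast
    then show ?thesis unfolding \<Phi>_def by (rule someI_ex[THEN spec])
  qed
  have "dist (\<Phi> v) (\<Phi> v') \<le> q * dist v v'" for v v'
  proof (rule dist_bound)
    fix x
    have "clamp 0 T x \<in> {0..T}" using clamp_in_interval[of 0 T x] T by (simp add: cbox_interval)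
    then show "dist (\<Phi> v x) (\<Phi> v' x) \<le> q * dist v v'"
      unfolding \<Phi> dist_real_def
      by (intro F_contr) (auto simp: dist_real_def[symmetric] dist_bounded)
  qed
  then obtain v where v: "\<Phi> v = v" using banach_fix_type[OF q] by blast
  have "F v t = v t" if "t \<in> {0..T}" for t
    using \<Phi>[of v t] v clamp_cancel_cbox[of t 0 T] that by (simp add: cbox_interval)
  then show ?thesis by (intro exI[of _ "apply_bcontfun v"]) auto
qed

text \<open>The damping factor \<open>exp (- g * r)\<close> makes \<open>v \<mapsto> (w - volterra_conv v k) / c\<close> a
  contraction with constant 1/2 in the sup norm, whatever the length of the interval; undoing the
  damping (\<open>u t = exp (g * t) * v t\<close>) then solves the undamped equation.\<close>

lemma volterra_second_kind_exists_damped: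
  fixes K w :: "real \<Rightarrow> real"
  assumes c: "c \<noteq> 0" and T: "0 \<le> T" and K: "continuous_on {0..T} K" and w: "continuous_on {0..T} w"
    and K_le: "\<And>r. r \<in> {0..T} \<Longrightarrow> \<bar>K r\<bar> \<le> M"
    and g: "g > 0" "2 * M \<le> g * \<bar>c\<bar>"
  shows "\<exists>v. continuous_on {0..T} v \<and>
    (\<forall>t\<in>{0..T}. c * v t + volterra_conv v (\<lambda>r. exp (- g * r) * K r) t = w t)"
proof -
  define k where "k r = exp (- g * r) * K r" for r
  have k: "continuous_on {0..T} k" unfolding k_def by (intro continuous_intros K)
  define F where "F v t = (w t - volterra_conv v k t) / c" for v t
  have "\<exists>v. continuous_on {0..T} v \<and> (\<forall>t\<in>{0..T}. F v t = v t)"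
  proof (rule fixed_point_continuous_on_interval[OF T, of "1/2"])
    show "continuous_on {0..T} (F v)" if "continuous_on {0..T} v" for v
      unfolding F_def by (intro continuous_intros continuous_on_volterra_conv k w that) (use c in auto)
  next
    fix v v' :: "real \<Rightarrow> real" and D t :: real
    assume v: "continuous_on {0..T} v" and v': "continuous_on {0..T} v'"
      and D: "\<And>s. s \<in> {0..T} \<Longrightarrow> \<bar>v s - v' s\<bar> \<le> D" and t: "t \<in> {0..T}"
    have sub: "{0..t} \<subseteq> {0..T}" using t by auto
    have "\<bar>volterra_conv (\<lambda>s. v s - v' s) k t\<bar> \<le> D * M / g"
      unfolding k_def
      by (rule abs_volterra_conv_damped_le[OF g(1)])
        (use t sub D K_le in \<open>auto intro!: continuous_intros continuous_on_subset[OF v]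
          continuous_on_subset[OF v'] continuous_on_subset[OF K]\<close>)
    also have "\<dots> \<le> 1/2 * D * \<bar>c\<bar>"
      using g mult_right_mono[OF g(2), of D] D[of 0] T by (simp add: field_simps)
    finally have "\<bar>volterra_conv (\<lambda>s. v s - v' s) k t\<bar> / \<bar>c\<bar> \<le> 1/2 * D"
      using c by (simp add: field_simps)
    moreover have "volterra_conv (\<lambda>s. v s - v' s) k t = volterra_conv v k t - volterra_conv v' k t"
      using sub by (intro volterra_conv_diff continuous_on_subset[OF v] continuous_on_subset[OF v']
        continuous_on_subset[OF k])
    ultimately show "\<bar>F v t - F v' t\<bar> \<le> 1/2 * D"
      by (simp add: F_def diff_divide_distrib[symmetric] abs_minus_commute)
  qed simp_all
  then obtain v where v: "continuous_on {0..T} v" and v_fix: "\<And>t. t \<in> {0..T} \<Longrightarrow> F v t = v t"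
    by blast
  have "c * v t + volterra_conv v k t = w t" if "t \<in> {0..T}" for t
    using v_fix[OF that] c by (simp add: F_def field_simps)
  with v show ?thesis unfolding k_def[abs_def] by blast
qed

lemma volterra_second_kind_exists_interval:
  fixes K u0 :: "real \<Rightarrow> real"
  assumes c: "c \<noteq> 0" and T: "0 \<le> T" and K: "continuous_on {0..T} K" and u0: "continuous_on {0..T} u0"
  shows "\<exists>u. continuous_on {0..T} u \<and> (\<forall>t\<in>{0..T}. c * u t + volterra_conv u K t = u0 t)"
proof -
  obtain M where M: "M \<ge> 0" "\<And>r. r \<in> {0..T} \<Longrightarrow> \<bar>K r\<bar> \<le> M"
    using continuous_on_compact_bound[OF compact_Icc K] by auto
  define g where "g = (2 * M + 1) / \<bar>c\<bar>"
  have g: "g > 0" "2 * M \<le> g * \<bar>c\<bar>" using M c by (auto simp: g_def)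
  have "continuous_on {0..T} (\<lambda>t. exp (- g * t) * u0 t)" by (intro continuous_intros u0)
  then obtain v where v: "continuous_on {0..T} v"
    and v_eq: "\<And>t. t \<in> {0..T} \<Longrightarrow>
      c * v t + volterra_conv v (\<lambda>r. exp (- g * r) * K r) t = exp (- g * t) * u0 t"
    using volterra_second_kind_exists_damped[OF c T K _ M(2) g] by blast
  define u where "u t = exp (g * t) * v t" for t
  have "c * u t + volterra_conv u K t = u0 t" if t: "t \<in> {0..T}" for t
  proof -
    have "volterra_conv u K t = exp (g * t) * volterra_conv v (\<lambda>r. exp (- g * r) * K r) t"
      unfolding volterra_conv_def integral_mult_right[symmetric]
    proof (rule integral_cong)
      fix s
      have "exp (g * s) = exp (g * t) * exp (- g * (t - s))"
        by (simp add: exp_add[symmetric] algebra_simps)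
      then show "u s * K (t - s) = exp (g * t) * (v s * (exp (- g * (t - s)) * K (t - s)))"
        by (simp add: u_def mult_ac)
    qed
    then have "c * u t + volterra_conv u K t =
        exp (g * t) * (c * v t + volterra_conv v (\<lambda>r. exp (- g * r) * K r) t)"
      by (simp add: u_def algebra_simps)
    also have "\<dots> = exp (g * t) * (exp (- g * t) * u0 t)"
      by (simp only: v_eq[OF t])
    also have "\<dots> = u0 t" by (simp add: mult.assoc[symmetric] exp_add[symmetric])
    finally show ?thesis .
  qed
  moreover have "continuous_on {0..T} u" unfolding u_def by (intro continuous_intros v)
  ultimately show ?thesis by blast
qed

lemma volterra_second_kind_exists:
  fixes K u0 :: "real \<Rightarrow> real"
  assumes c: "c \<noteq> 0" and K: "continuous_on {0..} K" and u0: "continuous_on {0..} u0"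
  shows "\<exists>u. continuous_on {0..} u \<and> (\<forall>t\<ge>0. c * u t + volterra_conv u K t = u0 t)"
proof -
  define solves where
    "solves T u \<longleftrightarrow> continuous_on {0..T} u \<and> (\<forall>t\<in>{0..T}. c * u t + volterra_conv u K t = u0 t)"
    for T u
  have K_T: "continuous_on {0..T} K" for T using K by (rule continuous_on_subset) auto
  define sol where "sol T = (SOME u. solves T u)" for T
  have sol: "solves T (sol T)" if "0 \<le> T" for T
  proof -
    have "\<exists>u. solves T u"
      unfolding solves_def
      by (rule volterra_second_kind_exists_interval[OF c that K_T]) (rule continuous_on_subset[OF u0], auto)
    then show ?thesis unfolding sol_def by (rule someI_ex)
  qed
  have sol_agree: "sol T1 t = sol T2 t" if "0 \<le> T1" "0 \<le> T2" "t \<in> {0..min T1 T2}" for T1 T2 t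
    by (rule volterra_second_kind_unique[OF c K_T _ _ _ _ that(3)])
      (use sol[OF that(1)] sol[OF that(2)] in \<open>auto simp: solves_def intro: continuous_on_subset\<close>)
  define u where "u t = sol (t + 1) t" for t
  have u_eq: "u s = sol (t + 1) s" if "0 \<le> t" "s \<in> {0..t + 1}" for s t
    using sol_agree[of "s + 1" "t + 1" s] that by (simp add: u_def)
  have "continuous (at t within {0..}) u" if t: "0 \<le> t" for t
  proof -
    have "continuous (at t within {0..t + 1}) (sol (t + 1))"
      using sol[of "t + 1"] t by (simp add: solves_def continuous_on_eq_continuous_within)
    then have "continuous (at t within {0..t + 1}) u"
      by (rule continuous_transform_within[where \<delta> = 1]) (use t u_eq in auto)
    moreover have "at t within {0..} = at t within {0..t + 1}"
      by (rule at_within_nhd[where S = "{..<t + 1}"]) auto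
    ultimately show ?thesis by simp
  qed
  then have "continuous_on {0..} u" by (simp add: continuous_on_eq_continuous_within)
  moreover have "c * u t + volterra_conv u K t = u0 t" if t: "t \<ge> 0" for t
  proof -
    have "volterra_conv u K t = volterra_conv (sol (t + 1)) K t"
      unfolding volterra_conv_def by (rule integral_cong) (use t u_eq in auto)
    then show ?thesis using sol[of "t + 1"] u_eq[of t t] t by (simp add: solves_def)
  qed
  ultimately show ?thesis by blast
qed

lemma C1_nonnegI:
  assumes "continuous_on {0..} f'" "\<And>t. t \<ge> 0 \<Longrightarrow> (f has_real_derivative f' t) (at t within {0..})"
  shows "C1_nonneg f"
  using assms unfolding C1_nonneg_def by blast

lemma C1_nonnegE:
  assumes "C1_nonneg f"
  obtains f' where "continuous_on {0..} f'"
    "\<And>t. t \<ge> 0 \<Longrightarrow> (f has_real_derivative f' t) (at t within {0..})"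
  using assms unfolding C1_nonneg_def by blast

lemma C1_nonneg_const: "C1_nonneg (\<lambda>_. c)"
  by (rule C1_nonnegI[of "\<lambda>_. 0"]) auto

lemma C1_nonneg_add:
  assumes "C1_nonneg f" "C1_nonneg g"
  shows "C1_nonneg (\<lambda>t. f t + g t)"
proof -
  obtain f' g' where "continuous_on {0..} f'" "continuous_on {0..} g'"
    and "\<And>t. t \<ge> 0 \<Longrightarrow> (f has_real_derivative f' t) (at t within {0..})"
    and "\<And>t. t \<ge> 0 \<Longrightarrow> (g has_real_derivative g' t) (at t within {0..})"
    using assms by (metis C1_nonnegE)
  then show ?thesis by (intro C1_nonnegI[of "\<lambda>t. f' t + g' t"] continuous_intros DERIV_add)
qed

lemma C1_nonneg_diff:
  assumes "C1_nonneg f" "C1_nonneg g"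
  shows "C1_nonneg (\<lambda>t. f t - g t)"
proof -
  obtain f' g' where "continuous_on {0..} f'" "continuous_on {0..} g'"
    and "\<And>t. t \<ge> 0 \<Longrightarrow> (f has_real_derivative f' t) (at t within {0..})"
    and "\<And>t. t \<ge> 0 \<Longrightarrow> (g has_real_derivative g' t) (at t within {0..})"
    using assms by (metis C1_nonnegE)
  then show ?thesis by (intro C1_nonnegI[of "\<lambda>t. f' t - g' t"] continuous_intros DERIV_diff)
qed

lemma C1_nonneg_mult_const:
  assumes "C1_nonneg f"
  shows "C1_nonneg (\<lambda>t. f t * c)"
proof -
  obtain f' where "continuous_on {0..} f'"
    and "\<And>t. t \<ge> 0 \<Longrightarrow> (f has_real_derivative f' t) (at t within {0..})"
    using assms by (metis C1_nonnegE)
  then show ?thesis by (intro C1_nonnegI[of "\<lambda>t. f' t * c"] continuous_intros DERIV_cmult_right)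
qed

lemma C1_nonneg_sum:
  "finite A \<Longrightarrow> (\<And>i. i \<in> A \<Longrightarrow> C1_nonneg (f i)) \<Longrightarrow> C1_nonneg (\<lambda>t. \<Sum>i\<in>A. f i t)"
  by (induction A rule: finite_induct) (auto intro: C1_nonneg_const C1_nonneg_add)

lemma C1_nonneg_imp_continuous_on: "C1_nonneg f \<Longrightarrow> continuous_on {0..} f"
  unfolding C1_nonneg_def continuous_on_eq_continuous_within
  by (auto intro: DERIV_continuous)

lemma volterra_first_kind_zero:
  fixes d G :: "real \<Rightarrow> real"
  assumes G: "C1_nonneg G" "G 0 \<noteq> 0" and T: "0 < T" and d: "continuous_on {0..T} d"
    and eq: "\<And>t. t \<in> {0..T} \<Longrightarrow> volterra_conv d G t = 0" and t: "t \<in> {0..T}"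
  shows "d t = 0"
proof -
  obtain G' where G': "continuous_on {0..} G'"
    and G_deriv: "\<And>t. t \<ge> 0 \<Longrightarrow> (G has_real_derivative G' t) (at t within {0..})"
    using C1_nonnegE[OF G(1)] by blast
  show ?thesis
  proof (rule volterra_second_kind_zero[OF G(2) continuous_on_subset[OF G'] d _ t])
    fix s assume s: "s \<in> {0..T}"
    have "(volterra_conv d G has_real_derivative d s * G 0 + volterra_conv d G' s) (at s within {0..T})"
      by (rule has_real_derivative_volterra_conv[OF d G_deriv G' s])
    moreover have "(volterra_conv d G has_real_derivative 0) (at s within {0..T})"
      by (rule has_field_derivative_transform_within[OF DERIV_const zero_less_one s]) (use eq in auto)
    ultimately have "d s * G 0 + volterra_conv d G' s = 0"
      unfolding has_real_derivative_iff_has_vector_derivative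
      by (intro vector_derivative_unique_within_closed_interval[OF T]) (use s in \<open>auto simp: cbox_interval\<close>)
    then show "G 0 * d s + volterra_conv d G' s = 0" by (simp add: mult.commute)
  qed auto
qed

lemma volterra_first_kind_unique:
  fixes \<theta>1 \<theta>2 G f :: "real \<Rightarrow> real"
  assumes G: "C1_nonneg G" "G 0 \<noteq> 0"
    and \<theta>1: "continuous_on {0..} \<theta>1" "\<And>t. t \<ge> 0 \<Longrightarrow> volterra_conv \<theta>1 G t = f t"
    and \<theta>2: "continuous_on {0..} \<theta>2" "\<And>t. t \<ge> 0 \<Longrightarrow> volterra_conv \<theta>2 G t = f t"
    and t: "t \<ge> 0"
  shows "\<theta>1 t = \<theta>2 t"
proof -
  have cont: "continuous_on {0..s} \<theta>1" "continuous_on {0..s} \<theta>2" "continuous_on {0..s} G" for s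
    using \<theta>1(1) \<theta>2(1) C1_nonneg_imp_continuous_on[OF G(1)] by (auto intro: continuous_on_subset)
  have "\<theta>1 t - \<theta>2 t = 0"
  proof (rule volterra_first_kind_zero[OF G, where T = "t + 1" and d = "\<lambda>s. \<theta>1 s - \<theta>2 s"])
    show "continuous_on {0..t + 1} (\<lambda>s. \<theta>1 s - \<theta>2 s)" by (intro continuous_intros cont)
    fix s assume "s \<in> {0..t + 1}"
    then show "volterra_conv (\<lambda>s. \<theta>1 s - \<theta>2 s) G s = 0"
      using \<theta>1(2) \<theta>2(2) by (simp add: volterra_conv_diff cont)
  qed (use t in auto)
  then show ?thesis by simp
qed

lemma volterra_first_kind_exists:
  fixes G f :: "real \<Rightarrow> real"
  assumes G: "C1_nonneg G" "G 0 \<noteq> 0" and f: "C1_nonneg f" "f 0 = 0"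
  shows "\<exists>\<theta>. continuous_on {0..} \<theta> \<and> (\<forall>t\<ge>0. volterra_conv \<theta> G t = f t)"
proof -
  obtain G' where G': "continuous_on {0..} G'"
    and G_deriv: "\<And>t. t \<ge> 0 \<Longrightarrow> (G has_real_derivative G' t) (at t within {0..})"
    using C1_nonnegE[OF G(1)] by blast
  obtain f' where f': "continuous_on {0..} f'"
    and f_deriv: "\<And>t. t \<ge> 0 \<Longrightarrow> (f has_real_derivative f' t) (at t within {0..})"
    using C1_nonnegE[OF f(1)] by blast
  obtain \<theta> where \<theta>: "continuous_on {0..} \<theta>"
    and \<theta>_eq: "\<And>t. t \<ge> 0 \<Longrightarrow> G 0 * \<theta> t + volterra_conv \<theta> G' t = f' t"
    using volterra_second_kind_exists[OF G(2) G' f'] by blast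
  have "volterra_conv \<theta> G t = f t" if t: "t \<ge> 0" for t
  proof -
    have "((\<lambda>_. 0) has_integral (volterra_conv \<theta> G t - f t) - (volterra_conv \<theta> G 0 - f 0)) {0..t}"
    proof (rule fundamental_theorem_of_calculus[OF t])
      fix s assume s: "s \<in> {0..t}"
      have "continuous_on {0..t} \<theta>" using \<theta> by (rule continuous_on_subset) auto
      from has_real_derivative_volterra_conv[OF this G_deriv G' s]
      have "(volterra_conv \<theta> G has_real_derivative f' s) (at s within {0..t})"
        using \<theta>_eq[of s] s by (simp add: mult.commute)
      moreover have "(f has_real_derivative f' s) (at s within {0..t})"
        using f_deriv[of s] s by (auto intro: has_field_derivative_subset)
      ultimately show "((\<lambda>s. volterra_conv \<theta> G s - f s) has_vector_derivative 0) (at s within {0..t})"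
        using DERIV_diff by (fastforce simp: has_real_derivative_iff_has_vector_derivative)
    qed
    then show ?thesis
      using has_integral_unique[OF _ has_integral_0] f(2) by (force simp: volterra_conv_def)
  qed
  with \<theta> show ?thesis by blast
qed

lemma continuous_on_matrix_vector_mult [continuous_intros]:
  fixes f :: "real \<Rightarrow> real^'n" and A :: "real^'n^'m"
  shows "continuous_on S f \<Longrightarrow> continuous_on S (\<lambda>t. A *v f t)"
  by (rule linear_continuous_on_compose[OF _ matrix_vector_mul_linear])

lemma has_real_derivative_ricF:
  fixes \<Psi> :: "real \<Rightarrow> real^'n"
  assumes "(\<Psi> has_vector_derivative P) (at t within S)"
  shows "((\<lambda>t. ricF A c (\<Psi> t)) has_real_derivative
           (1/2) * (P \<bullet> (A *v \<Psi> t) + \<Psi> t \<bullet> (A *v P)) + P \<bullet> c) (at t within S)"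
proof -
  have d: "(\<Psi> has_derivative (\<lambda>h. h *\<^sub>R P)) (at t within S)"
    using assms by (simp add: has_vector_derivative_def)
  have "((\<lambda>t. A *v \<Psi> t) has_derivative (\<lambda>h. A *v (h *\<^sub>R P))) (at t within S)"
    by (rule bounded_linear.has_derivative[OF matrix_vector_mul_bounded_linear d])
  from has_derivative_inner[OF d this] has_derivative_inner_left[OF d, of c]
  have "((\<lambda>t. ricF A c (\<Psi> t)) has_derivative
      (\<lambda>h. (1/2) * (\<Psi> t \<bullet> (A *v (h *\<^sub>R P)) + (h *\<^sub>R P) \<bullet> (A *v \<Psi> t)) + (h *\<^sub>R P) \<bullet> c)) (at t within S)"
    unfolding ricF_def by (intro has_derivative_add has_derivative_mult_right)
  then show ?thesis unfolding has_field_derivative_def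
    by (rule has_derivative_eq_rhs) (auto simp: fun_eq_iff matrix_vector_mult_scaleR algebra_simps)
qed

lemma C1_nonneg_ricF:
  fixes \<Psi> P :: "real \<Rightarrow> real^'n"
  assumes \<Psi>: "\<And>t. t \<ge> 0 \<Longrightarrow> (\<Psi> has_vector_derivative P t) (at t within {0..})"
    and P: "continuous_on {0..} P"
  shows "C1_nonneg (\<lambda>t. ricF A c (\<Psi> t))"
proof (rule C1_nonnegI)
  have "continuous_on {0..} \<Psi>"
    unfolding continuous_on_eq_continuous_within
    using \<Psi> by (auto intro: has_vector_derivative_continuous)
  then show "continuous_on {0..} (\<lambda>t. (1/2) * (P t \<bullet> (A *v \<Psi> t) + \<Psi> t \<bullet> (A *v P t)) + P t \<bullet> c)"
    by (intro continuous_intros P)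
qed (rule has_real_derivative_ricF[OF \<Psi>])

lemma ricR_component: "ricR alpha beta u $ i = ricF (alpha i) (beta i) u"
  by (simp add: ricR_def ricF_def)

lemma ricR_zero: "ricR alpha beta 0 = 0"
  by (simp add: ricR_def vec_eq_iff)

lemma riccati_global_solution_C1_ricF:
  assumes "riccati_global_solution a b alpha beta lam Phi Psi"
  shows "C1_nonneg (\<lambda>t. ricF A c (Psi t))"
proof (rule C1_nonneg_ricF)
  show \<Psi>: "(Psi has_vector_derivative ricR alpha beta (Psi t) - lam) (at t within {0..})" if "t \<ge> 0" for t
    using assms that unfolding riccati_global_solution_def by blast
  have "continuous_on {0..} Psi"
    unfolding continuous_on_eq_continuous_within
    using \<Psi> by (auto intro: has_vector_derivative_continuous)
  then show "continuous_on {0..} (\<lambda>t. ricR alpha beta (Psi t) - lam)"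
    unfolding ricR_def by (intro continuous_intros continuous_on_vec_lambda)
qed

lemma riccati_kernel_C1:
  assumes ric: "riccati_global_solution a b alpha beta lam Phi Psi" and lam: "lam \<bullet> axis k 1 \<noteq> 0"
  shows "C1_nonneg (\<lambda>t. (ricR alpha beta (Psi t) - lam) $ k)"
    and "(ricR alpha beta (Psi 0) - lam) $ k \<noteq> 0"
proof -
  show "C1_nonneg (\<lambda>t. (ricR alpha beta (Psi t) - lam) $ k)"
    by (simp add: ricR_component)
      (intro C1_nonneg_diff C1_nonneg_const riccati_global_solution_C1_ricF[OF ric])
  show "(ricR alpha beta (Psi 0) - lam) $ k \<noteq> 0"
    using ric lam by (simp add: riccati_global_solution_def ricR_zero cart_eq_inner_axis)
qed

lemma riccati_forcing_C1:
  assumes ric: "riccati_global_solution a b alpha beta lam Phi Psi"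
    and h: "C1_nonneg h" and h0: "h 0 = l + lam \<bullet> x"
  shows "C1_nonneg (\<lambda>t. l - ricF a b (Psi t) - (ricR alpha beta (Psi t) - lam) \<bullet> x - h t)"
    and "l - ricF a b (Psi 0) - (ricR alpha beta (Psi 0) - lam) \<bullet> x - h 0 = 0"
proof -
  have "C1_nonneg (\<lambda>t. l - ricF a b (Psi t)
      - (\<Sum>i\<in>UNIV. (ricF (alpha i) (beta i) (Psi t) - lam $ i) * x $ i) - h t)"
    by (intro C1_nonneg_diff C1_nonneg_const C1_nonneg_sum C1_nonneg_mult_const finite h
        riccati_global_solution_C1_ricF[OF ric])
  then show "C1_nonneg (\<lambda>t. l - ricF a b (Psi t) - (ricR alpha beta (Psi t) - lam) \<bullet> x - h t)"
    by (simp add: inner_vec_def ricR_component)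
  show "l - ricF a b (Psi 0) - (ricR alpha beta (Psi 0) - lam) \<bullet> x - h 0 = 0"
    using ric h0 by (simp add: riccati_global_solution_def ricR_zero ricF_def)
qed

lemma opH_eq_iff_volterra_conv:
  "h \<tau> = opH a b alpha beta lam l k Psi \<theta> x \<tau> \<longleftrightarrow>
    volterra_conv \<theta> (\<lambda>t. (ricR alpha beta (Psi t) - lam) $ k) \<tau> =
    l - ricF a b (Psi \<tau>) - (ricR alpha beta (Psi \<tau>) - lam) \<bullet> x - h \<tau>"
  by (auto simp: opH_def volterra_conv_def cart_eq_inner_axis)

theorem mainTheorem6:
  fixes a :: "real^'n^'n" and b :: "real^'n"
    and alpha :: "'n \<Rightarrow> real^'n^'n" and beta :: "'n \<Rightarrow> real^'n"
    and lam x :: "real^'n" and l :: real and k :: 'n and I :: "'n set"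
    and Phi h :: "real \<Rightarrow> real" and Psi :: "real \<Rightarrow> real^'n"
  assumes "psd_sym a" and "\<forall>i. psd_sym (alpha i)"
    and "lam \<bullet> axis k 1 \<noteq> 0"
    and "riccati_global_solution a b alpha beta lam Phi Psi"
    and "C1_nonneg h" and "x \<in> state_space I"
    and "h 0 = l + lam \<bullet> x"
  shows "\<exists>theta. continuous_on {0..} theta
           \<and> (\<forall>tau\<ge>0. h tau = opH a b alpha beta lam l k Psi theta x tau)
           \<and> (\<forall>theta'. continuous_on {0..} theta'
                 \<and> (\<forall>tau\<ge>0. h tau = opH a b alpha beta lam l k Psi theta' x tau)
                 \<longrightarrow> (\<forall>t\<ge>0. theta' t = theta t))"
proof -
  define G where "G t = (ricR alpha beta (Psi t) - lam) $ k" for t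
  define f where "f t = l - ricF a b (Psi t) - (ricR alpha beta (Psi t) - lam) \<bullet> x - h t" for t
  have G: "C1_nonneg G" "G 0 \<noteq> 0"
    unfolding G_def[abs_def] using riccati_kernel_C1[OF assms(4,3)] by simp_all
  have f: "C1_nonneg f" "f 0 = 0"
    unfolding f_def[abs_def] using riccati_forcing_C1[OF assms(4,5,7)] by simp_all
  have opH_iff: "h \<tau> = opH a b alpha beta lam l k Psi \<theta> x \<tau> \<longleftrightarrow> volterra_conv \<theta> G \<tau> = f \<tau>" for \<theta> \<tau>
    unfolding opH_eq_iff_volterra_conv G_def[abs_def] f_def ..
  obtain \<theta> where \<theta>: "continuous_on {0..} \<theta>" "\<And>t. t \<ge> 0 \<Longrightarrow> volterra_conv \<theta> G t = f t"
    using volterra_first_kind_exists[OF G f] by blast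
  have "h \<tau> = opH a b alpha beta lam l k Psi \<theta> x \<tau>" if "\<tau> \<ge> 0" for \<tau>
    using \<theta>(2)[OF that] by (simp add: opH_iff)
  moreover have "\<theta>' t = \<theta> t"
    if "continuous_on {0..} \<theta>'" "\<forall>\<tau>\<ge>0. h \<tau> = opH a b alpha beta lam l k Psi \<theta>' x \<tau>" "t \<ge> 0"
    for \<theta>' t
    by (rule volterra_first_kind_unique[OF G that(1) _ \<theta> that(3)]) (use that(2) opH_iff in blast)
  ultimately show ?thesis using \<theta>(1) by blast
qed

end
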